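(* Let $\Gamma$ be a commutative topological group and let $(X,\Gamma)$ be a minimal, weakly mixing, metric, tame dynamical system. Then $X$ is a single point.
   Context: A dynamical system $(X,\Gamma)$: compact Hausdorff $X$ with continuous action of $\Gamma$; metric means $X$ metrizable. $E(X,\Gamma)$ is the pointwise closure in $X^X$ of $\{x\mapsto\gamma x\}$; $(X,\Gamma)$ is tame if $E(X,\Gamma)$ is separable and Fréchet (every point in the closure of a set is a limit of a sequence from it). Weakly mixing: the product system $(X\times X,\Gamma)$ with diagonal action is topologically transitive. *)

theory Defs
  imports "HOL-Analysis.Analysis"
begin

definition group_action :: "('g::ab_group_add \<Rightarrow> 'x \<Rightarrow> 'x) \<Rightarrow> bool" where
  "group_action act \<longleftrightarrow> (\<forall>x. act 0 x = x) \<and> (\<forall>g h x. act (g + h) x = act g (act h x))"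

definition dynamical_system ::
  "('g::{topological_ab_group_add} \<Rightarrow> 'x::t2_space \<Rightarrow> 'x) \<Rightarrow> bool" where
  "dynamical_system act \<longleftrightarrow> group_action act \<and> compact (UNIV :: 'x set) \<and>
     continuous_on UNIV (\<lambda>p. act (fst p) (snd p))"

definition orbit :: "('g \<Rightarrow> 'x \<Rightarrow> 'x) \<Rightarrow> 'x \<Rightarrow> 'x set" where
  "orbit act x = range (\<lambda>g. act g x)"

definition minimal_system :: "('g \<Rightarrow> 'x::topological_space \<Rightarrow> 'x) \<Rightarrow> bool" where
  "minimal_system act \<longleftrightarrow> (\<forall>x. closure (orbit act x) = UNIV)"

definition top_transitive :: "('g \<Rightarrow> 'x::topological_space \<Rightarrow> 'x) \<Rightarrow> bool" where
  "top_transitive act \<longleftrightarrow> (\<forall>U V. open U \<longrightarrow> open V \<longrightarrow> U \<noteq> {} \<longrightarrow> V \<noteq> {} \<longrightarrow>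
      (\<exists>g. act g ` U \<inter> V \<noteq> {}))"

definition diag_action :: "('g \<Rightarrow> 'x \<Rightarrow> 'x) \<Rightarrow> 'g \<Rightarrow> 'x \<times> 'x \<Rightarrow> 'x \<times> 'x" where
  "diag_action act g p = (act g (fst p), act g (snd p))"

definition weakly_mixing :: "('g \<Rightarrow> 'x::topological_space \<Rightarrow> 'x) \<Rightarrow> bool" where
  "weakly_mixing act \<longleftrightarrow> top_transitive (diag_action act)"

text \<open>Enveloping semigroup: pointwise (product topology) closure of the maps x \<mapsto> g x in X^X.\<close>
definition enveloping :: "('g \<Rightarrow> 'x \<Rightarrow> 'x::topological_space) \<Rightarrow> ('x \<Rightarrow> 'x) set" where
  "enveloping act = closure (range act)"

definition separable_set :: "'a::topological_space set \<Rightarrow> bool" where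
  "separable_set S \<longleftrightarrow> (\<exists>D. countable D \<and> D \<subseteq> S \<and> S \<subseteq> closure D)"

definition frechet_set :: "'a::topological_space set \<Rightarrow> bool" where
  "frechet_set S \<longleftrightarrow> (\<forall>A \<subseteq> S. \<forall>f \<in> S \<inter> closure A.
      \<exists>s. (\<forall>n. s n \<in> A) \<and> s \<longlonglongrightarrow> f)"

definition tame :: "('g \<Rightarrow> 'x \<Rightarrow> 'x::topological_space) \<Rightarrow> bool" where
  "tame act \<longleftrightarrow> separable_set (enveloping act) \<and> frechet_set (enveloping act)"

end

theory Submission
  imports Defs
begin

(*
  Weak mixing of an abelian action gives Furstenberg's intersection property: finitely many
  hitting-time sets N(U_i, V_i) = {g. g U_i meets V_i} of nonempty open sets always have a
  common element. For two nonempty open sets U_0, U_1 with disjoint closures this lets one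
  choose g_0, g_1, ... one at a time so that every finite 0-1 pattern is realised: for each
  sigma there is x with g_i x in U_(sigma i) for all i < n. Along any subsequence, compactness
  then produces a point visiting the two closures alternately, so no subsequence of (g_n)
  converges pointwise. But the g_n are distinct elements of the compact enveloping semigroup,
  and in a compact Frechet space every injective sequence has a convergent subsequence.
*)

lemma compact_UNIV_fun:
  assumes "compact (UNIV :: 'b::topological_space set)"
  shows "compact (UNIV :: ('a \<Rightarrow> 'b) set)"
proof -
  have "compact_space (euclidean :: 'b topology)"
    using assms by (simp add: compact_space_def)
  then have "compact_space (product_topology (\<lambda>_::'a. euclidean :: 'b topology) UNIV)"
    by (simp add: compact_space_product_topology)
  then show ?thesis
    by (simp add: euclidean_product_topology compact_space_def)
qed

lemma tendsto_fun_apply: "s \<longlonglongrightarrow> f \<Longrightarrow> (\<lambda>n. s n x) \<longlonglongrightarrow> f x"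
  using continuous_on_tendsto_compose[OF continuous_on_product_coordinates, of s f sequentially x]
  by simp

lemma compact_t2_separating_closures:
  fixes a b :: "'a::t2_space"
  assumes "compact (UNIV :: 'a set)" "a \<noteq> b"
  obtains U V where "open U" "open V" "a \<in> U" "b \<in> V" "closure U \<inter> closure V = {}"
proof -
  obtain U V where UV: "open U" "open V" "a \<in> U" "b \<in> V" "U \<inter> V = {}"
    using assms(2) by (meson separation_t2)
  have "b \<notin> closure U"
    using UV open_Int_closure_eq_empty[of V U] by blast
  have "Hausdorff_space (euclidean :: 'a topology)"
    unfolding Hausdorff_space_def disjnt_def by (simp add: separation_t2)
  then have "regular_space (euclidean :: 'a topology)"
    using assms(1) by (simp add: compact_Hausdorff_imp_regular_space compact_space_def)
  then have "\<exists>W W'. open W \<and> open W' \<and> b \<in> W \<and> closure U \<subseteq> W' \<and> W \<inter> W' = {}"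
    using \<open>b \<notin> closure U\<close> unfolding regular_space_def disjnt_def by simp
  then obtain W W' where W: "open W" "open W'" "b \<in> W" "closure U \<subseteq> W'" "W \<inter> W' = {}"
    by blast
  then have "closure W \<inter> closure U = {}"
    using open_Int_closure_eq_empty[of W' W] by blast
  with UV W show thesis
    by (intro that[of U W]) auto
qed

lemma filterlim_at_top_strict_mono_subseq:
  fixes k :: "nat \<Rightarrow> nat"
  assumes "filterlim k at_top sequentially"
  obtains \<rho> :: "nat \<Rightarrow> nat" where "strict_mono \<rho>" "strict_mono (k \<circ> \<rho>)"
proof -
  have "\<exists>m. n < m \<and> k n < k m" for n
  proof -
    have "\<forall>\<^sub>F m in sequentially. Suc (k n) \<le> k m"
      using assms unfolding filterlim_at_top by blast
    moreover have "\<forall>\<^sub>F m in sequentially. n < m"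
      by (rule eventually_gt_at_top)
    ultimately have "\<forall>\<^sub>F m in sequentially. n < m \<and> k n < k m"
      by eventually_elim simp
    then obtain N where "\<forall>m\<ge>N. n < m \<and> k n < k m"
      unfolding eventually_sequentially by blast
    then show ?thesis
      by blast
  qed
  then obtain \<rho> where "\<forall>n. True \<and> \<rho> n < \<rho> (Suc n) \<and> k (\<rho> n) < k (\<rho> (Suc n))"
    using dependent_nat_choice[of "\<lambda>_ _. True" "\<lambda>_ n m. n < m \<and> k n < k m"] by blast
  then show thesis
    by (intro that[of \<rho>]) (simp_all add: strict_mono_Suc_iff)
qed

lemma frechet_compact_convergent_subseq:
  fixes s :: "nat \<Rightarrow> 'a \<Rightarrow> 'b::t2_space"
  assumes "compact K" "frechet_set K" "inj s" "range s \<subseteq> K"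
  obtains r l where "strict_mono r" "(s \<circ> r) \<longlonglongrightarrow> l"
proof -
  have "infinite (range s)"
    using assms(3) by (simp add: range_inj_infinite)
  then obtain l where "l \<in> K" "l islimpt range s"
    using Heine_Borel_imp_Bolzano_Weierstrass assms(1,4) by blast
  then have "l \<in> K \<inter> closure (range s - {l})" "range s - {l} \<subseteq> K"
    using assms(4) by (auto simp: islimpt_in_closure)
  then obtain t where t: "\<And>n. t n \<in> range s - {l}" "t \<longlonglongrightarrow> l"
    using assms(2) unfolding frechet_set_def by blast
  then have "\<forall>n. \<exists>m. t n = s m"
    by blast
  then obtain k where k: "\<And>n. t n = s (k n)"
    by metis
  have ne: "\<forall>\<^sub>F n in sequentially. k n \<noteq> m" for m
  proof (cases "s m = l")
    case True
    have "k n \<noteq> m" for n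
      using t(1)[of n] True unfolding k by auto
    then show ?thesis
      by simp
  next
    case False
    then obtain y where y: "s m y \<noteq> l y"
      by (auto simp: fun_eq_iff)
    show ?thesis
      using tendsto_imp_eventually_ne[OF tendsto_fun_apply[OF t(2)] not_sym[OF y]]
      by (auto simp: k elim: eventually_mono)
  qed
  have "filterlim k at_top sequentially"
    unfolding filterlim_at_top
  proof
    fix Z
    have "\<forall>\<^sub>F n in sequentially. \<forall>m\<in>{..<Z}. k n \<noteq> m"
      using ne by (intro eventually_ball_finite) auto
    then show "\<forall>\<^sub>F n in sequentially. Z \<le> k n"
      by eventually_elim (auto simp: not_less[symmetric])
  qed
  then obtain \<rho> :: "nat \<Rightarrow> nat" where \<rho>: "strict_mono \<rho>" "strict_mono (k \<circ> \<rho>)"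
    by (rule filterlim_at_top_strict_mono_subseq)
  have "(s \<circ> (k \<circ> \<rho>)) \<longlonglongrightarrow> l"
    using LIMSEQ_subseq_LIMSEQ[OF t(2) \<rho>(1)] by (simp add: k comp_def)
  with \<rho>(2) show thesis
    by (rule that)
qed

lemma dynamical_system_continuous_on:
  assumes "dynamical_system act"
  shows "continuous_on UNIV (act g)"
proof -
  have "continuous_on UNIV (\<lambda>p. act (fst p) (snd p))"
    using assms by (simp add: dynamical_system_def)
  moreover have "continuous_on UNIV (\<lambda>x. (g, x))"
    by (intro continuous_intros)
  ultimately show ?thesis
    using continuous_on_compose2 by fastforce
qed

lemma dynamical_system_open_vimage:
  "dynamical_system act \<Longrightarrow> open U \<Longrightarrow> open (act g -` U)"
  using dynamical_system_continuous_on continuous_on_open_vimage[of UNIV "act g"] by auto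

lemma dynamical_system_closed_vimage:
  "dynamical_system act \<Longrightarrow> closed U \<Longrightarrow> closed (act g -` U)"
  using dynamical_system_continuous_on continuous_on_closed_vimage[of UNIV "act g"] by auto

lemma group_action_commute:
  "group_action act \<Longrightarrow> act h (act g x) = act g (act h x)"
  unfolding group_action_def by (metis add.commute)

definition hitting_times :: "('g \<Rightarrow> 'x \<Rightarrow> 'x) \<Rightarrow> 'x set \<Rightarrow> 'x set \<Rightarrow> 'g set" where
  "hitting_times act U V = {g. act g ` U \<inter> V \<noteq> {}}"

lemma weakly_mixing_hitting_times:
  assumes "weakly_mixing act" "open U1" "open V1" "open U2" "open V2"
    "U1 \<noteq> {}" "V1 \<noteq> {}" "U2 \<noteq> {}" "V2 \<noteq> {}"
  shows "hitting_times act U1 U2 \<inter> hitting_times act V1 V2 \<noteq> {}"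
proof -
  have "top_transitive (diag_action act)"
    using assms(1) by (simp add: weakly_mixing_def)
  moreover have "U1 \<times> V1 \<noteq> {}" "U2 \<times> V2 \<noteq> {}"
    using assms(6-9) by simp_all
  ultimately obtain g where "diag_action act g ` (U1 \<times> V1) \<inter> (U2 \<times> V2) \<noteq> {}"
    unfolding top_transitive_def
    using open_Times[OF assms(2,3)] open_Times[OF assms(4,5)] by presburger
  then obtain u v where "u \<in> U1" "v \<in> V1" "act g u \<in> U2" "act g v \<in> V2"
    unfolding diag_action_def by auto
  then show ?thesis
    unfolding hitting_times_def by blast
qed

text \<open>Furstenberg's intersection lemma: by commutativity, the pair
  \<open>U1 \<inter> g\<inverse>U2, V1 \<inter> g\<inverse>V2\<close> controls both given pairs.\<close>
lemma weakly_mixing_hitting_times_Int: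
  fixes act :: "'g::topological_ab_group_add \<Rightarrow> 'x::t2_space \<Rightarrow> 'x"
  assumes ds: "dynamical_system act" and wm: "weakly_mixing act"
    and "open U1" "open V1" "open U2" "open V2" "U1 \<noteq> {}" "V1 \<noteq> {}" "U2 \<noteq> {}" "V2 \<noteq> {}"
  obtains U V where "open U" "open V" "U \<noteq> {}" "V \<noteq> {}"
    "hitting_times act U V \<subseteq> hitting_times act U1 V1 \<inter> hitting_times act U2 V2"
proof -
  obtain g where g: "act g ` U1 \<inter> U2 \<noteq> {}" "act g ` V1 \<inter> V2 \<noteq> {}"
    using weakly_mixing_hitting_times[OF wm assms(3-10)] unfolding hitting_times_def by blast
  define U where "U = U1 \<inter> act g -` U2"
  define V where "V = V1 \<inter> act g -` V2"
  have "hitting_times act U V \<subseteq> hitting_times act U2 V2"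
  proof
    fix h assume "h \<in> hitting_times act U V"
    then obtain u where "u \<in> U" "act h u \<in> V"
      unfolding hitting_times_def by blast
    moreover have "act g (act h u) = act h (act g u)"
      using ds unfolding dynamical_system_def by (simp add: group_action_commute)
    ultimately show "h \<in> hitting_times act U2 V2"
      unfolding hitting_times_def U_def V_def by auto
  qed
  moreover have "hitting_times act U V \<subseteq> hitting_times act U1 V1"
    unfolding hitting_times_def U_def V_def by blast
  moreover have "open U" "open V"
    unfolding U_def V_def using assms(3-6) dynamical_system_open_vimage[OF ds] by auto
  moreover have "U \<noteq> {}" "V \<noteq> {}"
    using g unfolding U_def V_def by auto
  ultimately show thesis
    by (intro that) auto
qed

lemma weakly_mixing_hitting_times_finite_Inter:
  fixes act :: "'g::topological_ab_group_add \<Rightarrow> 'x::t2_space \<Rightarrow> 'x"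
  assumes ds: "dynamical_system act" and wm: "weakly_mixing act"
    and "finite P" "\<And>U V. (U, V) \<in> P \<Longrightarrow> open U \<and> open V \<and> U \<noteq> {} \<and> V \<noteq> {}"
  shows "(\<Inter>(U, V)\<in>P. hitting_times act U V) \<noteq> {}"
proof -
  have "\<exists>U V. open U \<and> open V \<and> U \<noteq> {} \<and> V \<noteq> {} \<and>
      hitting_times act U V \<subseteq> (\<Inter>(U, V)\<in>P. hitting_times act U V)"
    using assms(3,4)
  proof (induction P rule: finite_induct)
    case empty
    show ?case by (intro exI[of _ UNIV]) auto
  next
    case (insert p P)
    obtain U2 V2 where p: "p = (U2, V2)" by fastforce
    obtain U1 V1 where UV1: "open U1" "open V1" "U1 \<noteq> {}" "V1 \<noteq> {}"
      and sub1: "hitting_times act U1 V1 \<subseteq> (\<Inter>(U, V)\<in>P. hitting_times act U V)"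
      using insert by auto
    have UV2: "open U2" "open V2" "U2 \<noteq> {}" "V2 \<noteq> {}"
      using insert.prems p by auto
    obtain U V where "open U" "open V" "U \<noteq> {}" "V \<noteq> {}"
      "hitting_times act U V \<subseteq> hitting_times act U1 V1 \<inter> hitting_times act U2 V2"
      using weakly_mixing_hitting_times_Int[OF ds wm UV1(1,2) UV2(1,2) UV1(3,4) UV2(3,4)] .
    with sub1 show ?case
      using p by (intro exI[of _ U] exI[of _ V]) auto
  qed
  then obtain U V where UV: "open U" "open V" "U \<noteq> {}" "V \<noteq> {}"
    and sub: "hitting_times act U V \<subseteq> (\<Inter>(U, V)\<in>P. hitting_times act U V)"
    by blast
  have "hitting_times act U V \<noteq> {}"
    using weakly_mixing_hitting_times[OF wm UV(1,1,2,2,3,3,4,4)] by blast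
  with sub show ?thesis
    by blast
qed

lemma finite_range_prefix_dependent:
  fixes F :: "(nat \<Rightarrow> 'a::finite) \<Rightarrow> 'b"
  assumes "\<And>\<sigma> \<tau>. (\<And>i. i < n \<Longrightarrow> \<sigma> i = \<tau> i) \<Longrightarrow> F \<sigma> = F \<tau>"
  shows "finite (range F)"
proof (rule finite_subset)
  show "range F \<subseteq> F ` (\<Pi>\<^sub>E i\<in>{..<n}. UNIV)"
  proof (rule image_subsetI)
    fix \<sigma>
    have "F \<sigma> = F (restrict \<sigma> {..<n})"
      by (rule assms) simp
    then show "F \<sigma> \<in> F ` (\<Pi>\<^sub>E i\<in>{..<n}. UNIV)"
      by simp
  qed
qed (simp add: finite_PiE)

definition independent_upto ::
    "('g \<Rightarrow> 'x \<Rightarrow> 'x) \<Rightarrow> (bool \<Rightarrow> 'x set) \<Rightarrow> (nat \<Rightarrow> 'g) \<Rightarrow> nat \<Rightarrow> bool" where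
  "independent_upto act U g n \<longleftrightarrow> (\<forall>\<sigma>. \<exists>x. \<forall>i<n. act (g i) x \<in> U (\<sigma> i))"

lemma independent_upto_cong:
  "(\<And>i. i < n \<Longrightarrow> g i = g' i) \<Longrightarrow>
    independent_upto act U g n = independent_upto act U g' n"
  unfolding independent_upto_def by simp

lemma independent_uptoE:
  assumes "independent_upto act U g n"
  obtains x where "\<And>i. i < n \<Longrightarrow> act (g i) x \<in> U (\<sigma> i)"
  using assms unfolding independent_upto_def by blast

lemma independent_upto_0: "independent_upto act U g 0"
  by (simp add: independent_upto_def)

lemma independent_upto_extend:
  fixes act :: "'g::topological_ab_group_add \<Rightarrow> 'x::t2_space \<Rightarrow> 'x"
  assumes ds: "dynamical_system act" and wm: "weakly_mixing act"
    and U: "\<And>c. open (U c)" "\<And>c. U c \<noteq> {}"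
    and ind: "independent_upto act U g n"
  obtains h where "independent_upto act U (g(n := h)) (Suc n)"
proof -
  define W where "W \<sigma> = (\<Inter>i<n. act (g i) -` U (\<sigma> i))" for \<sigma>
  define P where "P = range W \<times> range U"
  have "finite (range W)"
    by (rule finite_range_prefix_dependent[of n]) (simp add: W_def)
  then have "finite P"
    unfolding P_def by simp
  moreover have "open (W \<sigma>)" for \<sigma>
    unfolding W_def using U(1) by (intro open_INT) (auto simp: dynamical_system_open_vimage[OF ds])
  moreover have "W \<sigma> \<noteq> {}" for \<sigma>
  proof -
    obtain x where "\<And>i. i < n \<Longrightarrow> act (g i) x \<in> U (\<sigma> i)"
      using independent_uptoE[OF ind] by blast
    then have "x \<in> W \<sigma>"
      unfolding W_def by blast
    then show ?thesis
      by blast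
  qed
  ultimately have "(\<Inter>(A, B)\<in>P. hitting_times act A B) \<noteq> {}"
    using U by (intro weakly_mixing_hitting_times_finite_Inter[OF ds wm]) (auto simp: P_def)
  then obtain h where h: "h \<in> (\<Inter>(A, B)\<in>P. hitting_times act A B)"
    by (meson all_not_in_conv)
  show thesis
  proof (rule that, unfold independent_upto_def, rule allI)
    fix \<sigma>
    have "(W \<sigma>, U (\<sigma> n)) \<in> P"
      unfolding P_def by simp
    then have "h \<in> hitting_times act (W \<sigma>) (U (\<sigma> n))"
      using h by blast
    then obtain x where "x \<in> W \<sigma>" "act h x \<in> U (\<sigma> n)"
      unfolding hitting_times_def by blast
    then show "\<exists>x. \<forall>i<Suc n. act ((g(n := h)) i) x \<in> U (\<sigma> i)"
      unfolding W_def by (auto simp: less_Suc_eq)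
  qed
qed

lemma independent_sequence_exists:
  fixes act :: "'g::topological_ab_group_add \<Rightarrow> 'x::t2_space \<Rightarrow> 'x"
  assumes ds: "dynamical_system act" and wm: "weakly_mixing act"
    and U: "\<And>c. open (U c)" "\<And>c. U c \<noteq> {}"
  obtains g where "\<And>n. independent_upto act U g n"
proof -
  \<comment> \<open>\<open>g n\<close> is chosen knowing \<open>g 0, \<dots>, g (n - 1)\<close>: well-founded recursion\<close>
  have "\<exists>g. \<forall>n. independent_upto act U (g(n := g n)) (Suc n)"
  proof (rule dependent_wf_choice[OF wf_less])
    fix f g :: "nat \<Rightarrow> 'g" and n h
    assume "\<And>m. (m, n) \<in> {(x, y). x < y} \<Longrightarrow> f m = g m"
    then show "independent_upto act U (f(n := h)) (Suc n) =
        independent_upto act U (g(n := h)) (Suc n)"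
      by (intro independent_upto_cong) (auto simp: less_Suc_eq)
  next
    fix n and g :: "nat \<Rightarrow> 'g"
    assume prefix: "\<And>m. (m, n) \<in> {(x, y). x < y} \<Longrightarrow>
      independent_upto act U (g(m := g m)) (Suc m)"
    have "independent_upto act U g n"
      using prefix independent_upto_0 by (cases n) auto
    then obtain h where "independent_upto act U (g(n := h)) (Suc n)"
      by (rule independent_upto_extend[OF ds wm U])
    then show "\<exists>h. independent_upto act U (g(n := h)) (Suc n)" ..
  qed
  then obtain g where g: "\<And>n. independent_upto act U g (Suc n)"
    by auto
  have "independent_upto act U g n" for n
    using g independent_upto_0 by (cases n) auto
  then show thesis
    by (rule that)
qed

lemma independent_sequence_inj:
  assumes "\<And>n. independent_upto act U g n" "U False \<inter> U True = {}"
  shows "inj (\<lambda>n. act (g n))"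
proof (rule injI)
  fix m n
  assume eq: "act (g m) = act (g n)"
  obtain x where x: "\<And>i. i < Suc (max m n) \<Longrightarrow> act (g i) x \<in> U (i = m)"
    by (rule independent_uptoE[OF assms(1)[of "Suc (max m n)"], where \<sigma> = "\<lambda>i. i = m"]) blast
  have m: "act (g m) x \<in> U True" and n: "act (g n) x \<in> U (n = m)"
    using x[of m] x[of n] by (simp_all add: less_Suc_eq_le)
  show "m = n"
  proof (rule ccontr)
    assume "m \<noteq> n"
    then have "act (g m) x \<in> U False"
      using n eq by simp
    with m assms(2) show False
      by blast
  qed
qed

text \<open>Compactness yields a point whose orbit along \<open>g \<circ> r\<close> visits the two
  sets alternately.\<close>
lemma independent_sequence_not_convergent:
  fixes act :: "'g::topological_ab_group_add \<Rightarrow> 'x::t2_space \<Rightarrow> 'x"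
  assumes ds: "dynamical_system act" and ind: "\<And>n. independent_upto act U g n"
    and disj: "closure (U False) \<inter> closure (U True) = {}" and r: "strict_mono r"
  shows "\<not> (\<lambda>j. act (g (r j))) \<longlonglongrightarrow> f"
proof
  assume lim: "(\<lambda>j. act (g (r j))) \<longlonglongrightarrow> f"
  define K where "K j = act (g (r j)) -` closure (U (odd j))" for j
  have "UNIV \<inter> (\<Inter>j\<in>UNIV. K j) \<noteq> {}"
  proof (rule compact_imp_fip_image)
    show "compact (UNIV :: 'x set)"
      using ds by (simp add: dynamical_system_def)
    show "closed (K j)" for j
      unfolding K_def by (simp add: dynamical_system_closed_vimage[OF ds])
  next
    fix J :: "nat set"
    assume "finite J"
    obtain x where x: "\<And>i. i < Suc (Max (r ` J)) \<Longrightarrow> act (g i) x \<in> U (odd (inv r i))"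
      by (rule independent_uptoE[OF ind[of "Suc (Max (r ` J))"], where \<sigma> = "\<lambda>i. odd (inv r i)"])
        blast
    have "x \<in> K j" if "j \<in> J" for j
    proof -
      have "r j < Suc (Max (r ` J))"
        using \<open>finite J\<close> that by (simp add: le_imp_less_Suc)
      then have "act (g (r j)) x \<in> U (odd (inv r (r j)))"
        by (rule x)
      moreover have "inv r (r j) = j"
        using strict_mono_imp_inj_on[OF r] by (simp add: inv_f_f)
      ultimately have "act (g (r j)) x \<in> U (odd j)"
        by simp
      then show ?thesis
        unfolding K_def using closure_subset by blast
    qed
    then show "UNIV \<inter> (\<Inter>j\<in>J. K j) \<noteq> {}"
      by blast
  qed
  then obtain x where x: "\<And>j. act (g (r j)) x \<in> closure (U (odd j))"
    unfolding K_def by blast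
  have conv: "(\<lambda>j. act (g (r j)) x) \<longlonglongrightarrow> f x"
    using tendsto_fun_apply[OF lim] .
  have "act (g (r (2 * j))) x \<in> closure (U False)" for j
    using x[of "2 * j"] by simp
  moreover have "(\<lambda>j. act (g (r (2 * j))) x) \<longlonglongrightarrow> f x"
    using LIMSEQ_subseq_LIMSEQ[OF conv, of "\<lambda>j. 2 * j"] by (simp add: strict_mono_def comp_def)
  ultimately have "f x \<in> closure (U False)"
    by (rule closed_sequentially[OF closed_closure])
  have "act (g (r (2 * j + 1))) x \<in> closure (U True)" for j
    using x[of "2 * j + 1"] by simp
  moreover have "(\<lambda>j. act (g (r (2 * j + 1))) x) \<longlonglongrightarrow> f x"
    using LIMSEQ_subseq_LIMSEQ[OF conv, of "\<lambda>j. 2 * j + 1"] by (simp add: strict_mono_def comp_def)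
  ultimately have "f x \<in> closure (U True)"
    by (rule closed_sequentially[OF closed_closure])
  with \<open>f x \<in> closure (U False)\<close> show False
    using disj by blast
qed

theorem weakly_mixing_frechet_enveloping_singleton:
  fixes act :: "'g::topological_ab_group_add \<Rightarrow> 'x::t2_space \<Rightarrow> 'x"
  assumes ds: "dynamical_system act" and wm: "weakly_mixing act"
    and fr: "frechet_set (enveloping act)"
  shows "\<exists>x0::'x. (UNIV :: 'x set) = {x0}"
proof (rule ccontr)
  assume "\<nexists>x0::'x. UNIV = {x0}"
  then obtain a b :: 'x where "a \<noteq> b"
    by blast
  have cX: "compact (UNIV :: 'x set)"
    using ds by (simp add: dynamical_system_def)
  obtain V0 V1 where V: "open V0" "open V1" "a \<in> V0" "b \<in> V1"
    "closure V0 \<inter> closure V1 = {}"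
    by (rule compact_t2_separating_closures[OF cX \<open>a \<noteq> b\<close>])
  define U where "U c = (if c then V1 else V0)" for c
  have "open (U c)" "U c \<noteq> {}" for c
    using V unfolding U_def by auto
  then obtain g where ind: "\<And>n. independent_upto act U g n"
    using independent_sequence_exists[OF ds wm] by blast
  have disj: "closure (U False) \<inter> closure (U True) = {}"
    using V unfolding U_def by simp
  then have "U False \<inter> U True = {}"
    using closure_subset by blast
  then have inj: "inj (\<lambda>n. act (g n))"
    by (rule independent_sequence_inj[OF ind])
  have compact: "compact (enveloping act)"
    using compact_Int_closed[OF compact_UNIV_fun[OF cX] closed_closure]
    unfolding enveloping_def by simp
  have "range (\<lambda>n. act (g n)) \<subseteq> range act"
    by auto
  also have "\<dots> \<subseteq> enveloping act"
    unfolding enveloping_def by (rule closure_subset)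
  finally obtain r f where "strict_mono r" "((\<lambda>n. act (g n)) \<circ> r) \<longlonglongrightarrow> f"
    by (rule frechet_compact_convergent_subseq[OF compact fr inj])
  then show False
    using independent_sequence_not_convergent[OF ds ind disj] by (simp add: comp_def)
qed

theorem mainTheorem8:
  fixes act :: "'g::topological_ab_group_add \<Rightarrow> 'x::metric_space \<Rightarrow> 'x"
  assumes "dynamical_system act"
    and "minimal_system act"
    and "weakly_mixing act"
    and "tame act"
  shows "\<exists>x0::'x. (UNIV :: 'x set) = {x0}"
proof -
  have "frechet_set (enveloping act)"
    using assms(4) by (simp add: tame_def)
  then show ?thesis
    by (rule weakly_mixing_frechet_enveloping_singleton[OF assms(1,3)])
qed

end
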